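(* Let $g:\{0,1,2,3\}^*\to\{0,1,2,3\}^*$ be the morphism $g(0)=01$, $g(1)=20$, $g(2)=23$, $g(3)=02$, and $\tau$ the coding $\tau(0)=2$, $\tau(1)=1$, $\tau(2)=0$, $\tau(3)=1$; let $\mathbf{vtm}=\tau(g^\omega(0))$. Let $\eta:\{0,1,2\}^*\to\{0,1\}^*$ be the morphism $\eta(0)=00011101$, $\eta(1)=001110001101$, $\eta(2)=0011000111001101$. Then the infinite word $\eta(\mathbf{vtm})$ contains only three distinct squares: $0^2$, $1^2$, and $(10)^2$. It is $2$-automatic and can be generated by a $2$-automaton with $27$ states (so its weight is $2\cdot 27=54$).
   Context: A square is a nonempty word $xx$; "containing" means as a factor. $g^\omega(0)$ denotes the infinite fixed point of $g$ starting with $0$. A $2$-automaton (DFAO) with $s$ states generates $(a_n)_{n\ge0}$ if on input the base-$2$ representation of $n$ (most significant digit first) it outputs $a_n$; a word is $2$-automatic if some such automaton generates it; equivalently it is the image under a coding of a fixed point of a $2$-uniform morphism on $s$ letters. The weight of such a word is $2\cdot s$. *)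

theory Defs
  imports Main
begin

definition morph_apply :: "(nat \<Rightarrow> nat list) \<Rightarrow> nat list \<Rightarrow> nat list" where
  "morph_apply h xs = concat (map h xs)"

text \<open>Fixed point h^omega(a) of a morphism h prolongable on a with all images of
  length at least 2 (here: 2-uniform): position n is read from the finite prefix
  h^(n+1)(a), which has length at least n+1.\<close>
definition morph_fix :: "(nat \<Rightarrow> nat list) \<Rightarrow> nat \<Rightarrow> nat \<Rightarrow> nat" where
  "morph_fix h a n = ((morph_apply h ^^ Suc n) [a]) ! n"

text \<open>Image of an infinite word under a nonerasing morphism: position n lies
  within the image of the first n+1 letters.\<close>
definition morph_inf :: "(nat \<Rightarrow> nat list) \<Rightarrow> (nat \<Rightarrow> nat) \<Rightarrow> nat \<Rightarrow> nat" where
  "morph_inf h w n = morph_apply h (map w [0..<Suc n]) ! n"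

definition g :: "nat \<Rightarrow> nat list" where
  "g x = (if x = 0 then [0,1] else if x = 1 then [2,0] else if x = 2 then [2,3] else [0,2])"

definition tau :: "nat \<Rightarrow> nat" where
  "tau x = (if x = 0 then 2 else if x = 1 then 1 else if x = 2 then 0 else 1)"

definition vtm :: "nat \<Rightarrow> nat" where
  "vtm n = tau (morph_fix g 0 n)"

definition eta :: "nat \<Rightarrow> nat list" where
  "eta x = (if x = 0 then [0,0,0,1,1,1,0,1]
            else if x = 1 then [0,0,1,1,1,0,0,0,1,1,0,1]
            else [0,0,1,1,0,0,0,1,1,1,0,0,1,1,0,1])"

definition is_factor :: "nat list \<Rightarrow> (nat \<Rightarrow> nat) \<Rightarrow> bool" where
  "is_factor u w \<longleftrightarrow> (\<exists>i. u = map w [i..<i + length u])"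

definition is_square :: "nat list \<Rightarrow> bool" where
  "is_square u \<longleftrightarrow> (\<exists>x. x \<noteq> [] \<and> u = x @ x)"

text \<open>Base-2 representation, most significant digit first, no leading zeros
  (the representation of 0 is the empty word).\<close>
fun bin_digits :: "nat \<Rightarrow> nat list" where
  "bin_digits n = (if n = 0 then [] else bin_digits (n div 2) @ [n mod 2])"

definition dfao_generates ::
  "nat \<Rightarrow> (nat \<Rightarrow> nat \<Rightarrow> nat) \<Rightarrow> nat \<Rightarrow> (nat \<Rightarrow> nat) \<Rightarrow> (nat \<Rightarrow> nat) \<Rightarrow> bool" where
  "dfao_generates s delta q0 out w \<longleftrightarrow>
     q0 < s \<and> (\<forall>q<s. \<forall>d<2. delta q d < s) \<and>
     (\<forall>n. out (foldl delta q0 (bin_digits n)) = w n)"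

definition two_automatic_with :: "nat \<Rightarrow> (nat \<Rightarrow> nat) \<Rightarrow> bool" where
  "two_automatic_with s w \<longleftrightarrow> (\<exists>delta q0 out. dfao_generates s delta q0 out w)"

end

theory Submission
  imports Defs "HOL-Library.Sublist"
begin

text \<open>
  The letters 1 and 2 of \<open>g\<^sup>\<omega>(0)\<close> mark the Thue--Morse word \<open>t\<close>, and \<open>vtm\<close>
  records the first differences of \<open>t\<close>; as \<open>t\<close> is overlap-free, \<open>vtm\<close> is
  squarefree. The blocks \<open>\<eta>(0), \<eta>(1), \<eta>(2)\<close> have lengths 8, 12, 16, so block \<open>k\<close>
  of \<open>\<eta>(vtm)\<close> starts at \<open>12 k + 4 t(k)\<close>.

  Every block ends with 101, which occurs nowhere else across two blocks, and begins with
  one of three 8-letter words, which occur nowhere else. So in a square of period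
  \<open>p \<ge> 16\<close> the block boundaries of the first half are carried by \<open>+p\<close> onto those
  of the second half; blocks of equal length carry equal letters of \<open>vtm\<close>, and a
  synchronisation property of \<open>\<eta>\<close> at the two ends of the square turns it into a square
  of \<open>vtm\<close>. Squares of period below 16 lie within five consecutive blocks and are found by
  inspecting the 16 factors of length 5 of \<open>g\<^sup>\<omega>(0)\<close>.

  Reading \<open>n\<close> in binary, most significant digit first, one keeps track of the block
  containing position \<open>n\<close> (through two consecutive letters of \<open>g\<^sup>\<omega>(0)\<close>) and the
  offset within it: this is a 72-state automaton, which minimises to 27 states.
\<close>

section \<open>Uniform morphisms and their fixed points\<close>

lemma morph_apply_Nil [simp]: "morph_apply h [] = []"
  by (simp add: morph_apply_def)

lemma morph_apply_Cons [simp]: "morph_apply h (x # xs) = h x @ morph_apply h xs"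
  by (simp add: morph_apply_def)

lemma morph_apply_append [simp]: "morph_apply h (xs @ ys) = morph_apply h xs @ morph_apply h ys"
  by (simp add: morph_apply_def)

lemma length_morph_apply_ge:
  assumes "\<And>x. L \<le> length (h x)"
  shows "L * length xs \<le> length (morph_apply h xs)"
  using assms by (induction xs) (auto intro: add_mono)

locale uniform_morphism =
  fixes h :: "nat \<Rightarrow> nat list" and L :: nat
  assumes length_image [simp]: "length (h x) = L"
begin

lemma length_morph_apply [simp]: "length (morph_apply h xs) = L * length xs"
  by (induction xs) auto

lemma length_morph_iterate [simp]: "length ((morph_apply h ^^ m) [a]) = L ^ m"
  by (induction m) simp_all

lemma nth_morph_apply:
  assumes "n < length xs" and "c < L"
  shows "morph_apply h xs ! (L * n + c) = h (xs ! n) ! c"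
  using assms(1)
proof (induction xs arbitrary: n)
  case Nil
  then show ?case by simp
next
  case (Cons x xs)
  show ?case
  proof (cases n)
    case 0
    then show ?thesis using \<open>c < L\<close> by (simp add: nth_append)
  next
    case (Suc m)
    then have "L * n + c = L + (L * m + c)" by simp
    then show ?thesis using Cons Suc by (simp add: nth_append)
  qed
qed

end

lemma prefix_morph_apply: "prefix xs ys \<Longrightarrow> prefix (morph_apply h xs) (morph_apply h ys)"
  by (auto elim!: prefixE)

lemma less_power_self: "2 \<le> L \<Longrightarrow> n < L ^ n"
  using less_exp[of n] power_mono[of 2 L n] by linarith

locale prolongable_uniform_morphism = uniform_morphism +
  fixes a :: nat
  assumes two_le_length: "2 \<le> L" and prolongable: "prefix [a] (h a)"
begin

lemma prefix_morph_iterate: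
  assumes "m \<le> m'"
  shows "prefix ((morph_apply h ^^ m) [a]) ((morph_apply h ^^ m') [a])"
proof -
  have one_step: "prefix ((morph_apply h ^^ k) [a]) ((morph_apply h ^^ Suc k) [a])" for k
    by (induction k) (simp_all add: prolongable prefix_morph_apply)
  from assms show ?thesis
  proof (induction rule: dec_induct)
    case (step k)
    then show ?case using one_step prefix_order.trans by blast
  qed simp
qed

lemma morph_fix_eq_nth_iterate:
  assumes "n < L ^ m"
  shows "morph_fix h a n = (morph_apply h ^^ m) [a] ! n"
proof -
  have nth_eq: "(morph_apply h ^^ m') [a] ! n = (morph_apply h ^^ m) [a] ! n"
    if "m \<le> m'" and "n < L ^ m" for m m'
  proof -
    obtain zs where "(morph_apply h ^^ m') [a] = (morph_apply h ^^ m) [a] @ zs"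
      using prefix_morph_iterate[OF \<open>m \<le> m'\<close>] by (auto elim: prefixE)
    then show ?thesis using \<open>n < L ^ m\<close> by (simp add: nth_append)
  qed
  have "n < L ^ Suc n"
    using less_power_self[OF two_le_length, of n] two_le_length by (simp add: less_le_trans)
  then show ?thesis
    using nth_eq[of "Suc n" "max m (Suc n)"] nth_eq[of m "max m (Suc n)"] assms
    by (simp add: morph_fix_def)
qed

lemma map_morph_fix_prefix:
  "n \<le> L ^ m \<Longrightarrow> map (morph_fix h a) [0..<n] = take n ((morph_apply h ^^ m) [a])"
  by (intro nth_equalityI) (auto simp: morph_fix_eq_nth_iterate)

lemma morph_fix_rec:
  assumes "c < L"
  shows "morph_fix h a (L * n + c) = h (morph_fix h a n) ! c"
proof -
  have n: "n < L ^ n" using less_power_self[OF two_le_length] .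
  have "L * n + c < L * Suc n" using \<open>c < L\<close> by simp
  also have "\<dots> \<le> L * L ^ n" using n by (intro mult_le_mono2) simp
  finally have "morph_fix h a (L * n + c) = (morph_apply h ^^ Suc n) [a] ! (L * n + c)"
    by (intro morph_fix_eq_nth_iterate) simp
  also have "\<dots> = h ((morph_apply h ^^ n) [a] ! n) ! c"
    using n \<open>c < L\<close> by (simp add: nth_morph_apply)
  also have "(morph_apply h ^^ n) [a] ! n = morph_fix h a n"
    using morph_fix_eq_nth_iterate[OF n] by simp
  finally show ?thesis .
qed

lemma map_morph_fix_upt:
  assumes "c + l \<le> L * r"
  shows "map (morph_fix h a) [L * m + c..<L * m + c + l]
    = take l (drop c (morph_apply h (map (morph_fix h a) [m..<m + r])))"
proof (rule nth_equalityI)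
  fix e
  assume "e < length (map (morph_fix h a) [L * m + c..<L * m + c + l])"
  then have e: "e < l" by simp
  define d where "d = c + e"
  have L: "0 < L" using two_le_length by simp
  have d: "d = L * (d div L) + d mod L" "d mod L < L" using L by simp_all
  have "d div L < r" using e assms L by (simp add: d_def div_less_iff_less_mult mult.commute)
  then have "morph_apply h (map (morph_fix h a) [m..<m + r]) ! d
      = h (morph_fix h a (m + d div L)) ! (d mod L)"
    using nth_morph_apply[of "d div L" "map (morph_fix h a) [m..<m + r]" "d mod L"] d
    by simp
  also have "\<dots> = morph_fix h a (L * m + c + e)"
    using morph_fix_rec[OF d(2), of "m + d div L"] d(1) by (simp add: d_def algebra_simps)
  finally show "map (morph_fix h a) [L * m + c..<L * m + c + l] ! e
      = take l (drop c (morph_apply h (map (morph_fix h a) [m..<m + r]))) ! e"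
    using e assms by (simp add: d_def)
qed (use assms in simp)

end

section \<open>Strictly increasing sequences of positions\<close>

lemma strict_mono_interval_cover:
  fixes P :: "nat \<Rightarrow> nat"
  assumes "strict_mono P" and "P 0 = 0"
  obtains k where "P k \<le> n" and "n < P (Suc k)"
proof -
  have "\<exists>k. P k \<le> n \<and> n < P (Suc k)"
  proof (induction n)
    case 0
    have "P 0 < P (Suc 0)" using assms(1) by (simp add: strict_mono_less)
    then show ?case using assms(2) by auto
  next
    case (Suc n)
    then obtain k where k: "P k \<le> n" "n < P (Suc k)" by blast
    show ?case
    proof (cases "Suc n < P (Suc k)")
      case True
      then show ?thesis using k by (intro exI[of _ k]) simp
    next
      case False
      moreover have "P (Suc k) < P (Suc (Suc k))" using assms(1) by (simp add: strict_mono_less)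
      ultimately show ?thesis using k by (intro exI[of _ "Suc k"]) simp
    qed
  qed
  then show ?thesis using that by blast
qed

lemma range_strict_mono_between:
  fixes P :: "nat \<Rightarrow> nat"
  assumes "strict_mono P" and "P k \<le> n" and "n < P (Suc k)"
  shows "n \<in> range P \<longleftrightarrow> n = P k"
proof
  assume "n \<in> range P"
  then obtain k' where "n = P k'" by blast
  with assms have "k \<le> k'" and "k' < Suc k"
    by (simp_all add: strict_mono_less_eq strict_mono_less)
  then have "k' = k" by simp
  then show "n = P k" using \<open>n = P k'\<close> by simp
qed simp

lemma strict_mono_range_shift_Suc:
  fixes P :: "nat \<Rightarrow> nat"
  assumes mono: "strict_mono P"
    and shift: "\<And>n. i \<le> n \<Longrightarrow> n \<le> i + p \<Longrightarrow> n \<in> range P \<longleftrightarrow> n + p \<in> range P"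
    and "i \<le> P k" and "P (Suc k) \<le> i + p" and shifted: "P (k + q) = P k + p"
  shows "P (Suc k + q) = P (Suc k) + p"
proof -
  have lt: "P k < P (Suc k)" using mono by (simp add: strict_mono_less)
  obtain k' where k': "P (Suc k) + p = P k'" using shift[of "P (Suc k)"] assms(3,4) lt by fastforce
  have "P (k + q) < P k'" using shifted k' lt by simp
  then have "k + q < k'" using mono by (simp add: strict_mono_less)
  moreover have "\<not> Suc (k + q) < k'"
  proof
    assume "Suc (k + q) < k'"
    then have "P (Suc (k + q)) < P k'" using mono by (simp add: strict_mono_less)
    moreover have "P (k + q) < P (Suc (k + q))" using mono by (simp add: strict_mono_less)
    ultimately have n: "P k < P (Suc (k + q)) - p" "P (Suc (k + q)) - p < P (Suc k)"
      using shifted k' by simp_all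
    then have "P (Suc (k + q)) - p \<in> range P"
      using shift[of "P (Suc (k + q)) - p"] assms(3,4) shifted by simp
    then show False using range_strict_mono_between[OF mono, of k] n by simp
  qed
  ultimately have "k' = Suc (k + q)" by simp
  then show ?thesis using k' by simp
qed

lemma strict_mono_range_shift:
  fixes P :: "nat \<Rightarrow> nat"
  assumes mono: "strict_mono P"
    and shift: "\<And>n. i \<le> n \<Longrightarrow> n \<le> i + p \<Longrightarrow> n \<in> range P \<longleftrightarrow> n + p \<in> range P"
  obtains q where "\<And>k. i \<le> P k \<Longrightarrow> P k \<le> i + p \<Longrightarrow> P (k + q) = P k + p"
proof -
  have "\<exists>k. i \<le> P k" using strict_mono_imp_increasing[OF mono, of i] by blast
  define k1 where "k1 = (LEAST k. i \<le> P k)"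
  have k1: "i \<le> P k1" unfolding k1_def by (rule LeastI_ex) fact
  have first: "k1 \<le> k" if "i \<le> P k" for k unfolding k1_def using that by (rule Least_le)
  show ?thesis
  proof (cases "P k1 \<le> i + p")
    case False
    have "\<not> P k \<le> i + p" if "i \<le> P k" for k
      using False first[OF that] mono by (meson le_trans strict_mono_less_eq)
    then show ?thesis using that by blast
  next
    case True
    obtain k2 where k2: "P k1 + p = P k2" using shift[OF k1 True] by auto
    have "k1 \<le> k2" using k2 mono by (metis le_add1 strict_mono_less_eq)
    define q where "q = k2 - k1"
    have shifted: "P (k1 + r + q) = P (k1 + r) + p" if "P (k1 + r) \<le> i + p" for r
      using that
    proof (induction r)
      case 0
      then show ?case using k2 \<open>k1 \<le> k2\<close> by (simp add: q_def)
    next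
      case (Suc r)
      have "P (k1 + r) < P (k1 + Suc r)" using mono by (simp add: strict_mono_less)
      moreover have "i \<le> P (k1 + r)" using k1 mono by (meson le_add1 le_trans strict_mono_less_eq)
      ultimately show ?case
        using strict_mono_range_shift_Suc[where i = i and p = p and k = "k1 + r" and q = q, OF mono shift] Suc by simp
    qed
    show ?thesis
    proof (rule that)
      fix k
      assume "i \<le> P k" and "P k \<le> i + p"
      moreover obtain r where "k = k1 + r" using first[OF \<open>i \<le> P k\<close>] le_Suc_ex by blast
      ultimately show "P (k + q) = P k + p" using shifted by simp
    qed
  qed
qed

section \<open>Images of infinite words under nonerasing morphisms\<close>

definition morph_pos :: "(nat \<Rightarrow> nat list) \<Rightarrow> (nat \<Rightarrow> nat) \<Rightarrow> nat \<Rightarrow> nat" where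
  "morph_pos h w k = length (morph_apply h (map w [0..<k]))"

lemma morph_pos_0 [simp]: "morph_pos h w 0 = 0"
  by (simp add: morph_pos_def)

lemma morph_pos_Suc: "morph_pos h w (Suc k) = morph_pos h w k + length (h (w k))"
  by (simp add: morph_pos_def)

lemma strict_mono_morph_pos: "(\<And>x. h x \<noteq> []) \<Longrightarrow> strict_mono (morph_pos h w)"
  by (simp add: strict_mono_Suc_iff morph_pos_Suc)

lemma morph_apply_upt_split:
  "k \<le> N \<Longrightarrow> morph_apply h (map w [0..<N])
    = morph_apply h (map w [0..<k]) @ morph_apply h (map w [k..<N])"
  by (metis le_add_diff_inverse morph_apply_append map_append upt_add_eq_append zero_le)

lemma morph_inf_eq_nth:
  assumes nonerasing: "\<And>x. h x \<noteq> []" and "n < length (morph_apply h (map w [0..<N]))"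
  shows "morph_inf h w n = morph_apply h (map w [0..<N]) ! n"
proof -
  have nth_eq: "morph_apply h (map w [0..<M]) ! n = morph_apply h (map w [0..<N']) ! n"
    if "N' \<le> M" and "n < length (morph_apply h (map w [0..<N']))" for N' M
    using that by (simp add: morph_apply_upt_split[of N' M] nth_append)
  have "Suc n \<le> length (morph_apply h (map w [0..<Suc n]))"
    using length_morph_apply_ge[of 1 h "map w [0..<Suc n]"] nonerasing
    by (simp add: Suc_le_eq length_greater_0_conv)
  then show ?thesis
    using nth_eq[of "Suc n" "max N (Suc n)"] nth_eq[of N "max N (Suc n)"] assms(2)
    by (simp add: morph_inf_def)
qed

lemma map_morph_inf_upt:
  assumes nonerasing: "\<And>x. h x \<noteq> []"
    and "j + l \<le> length (morph_apply h (map w [k..<k + r]))"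
  shows "map (morph_inf h w) [morph_pos h w k + j..<morph_pos h w k + j + l]
    = take l (drop j (morph_apply h (map w [k..<k + r])))"
proof (rule nth_equalityI)
  fix e
  assume "e < length (map (morph_inf h w) [morph_pos h w k + j..<morph_pos h w k + j + l])"
  then have e: "e < l" by simp
  have split: "morph_apply h (map w [0..<k + r])
      = morph_apply h (map w [0..<k]) @ morph_apply h (map w [k..<k + r])"
    by (simp add: morph_apply_upt_split)
  have "morph_inf h w (morph_pos h w k + j + e)
      = morph_apply h (map w [0..<k + r]) ! (morph_pos h w k + j + e)"
    using e assms(2) by (intro morph_inf_eq_nth[OF nonerasing]) (simp add: split morph_pos_def)
  then show "map (morph_inf h w) [morph_pos h w k + j..<morph_pos h w k + j + l] ! e
      = take l (drop j (morph_apply h (map w [k..<k + r]))) ! e"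
    using e assms(2) by (simp add: split morph_pos_def nth_append)
qed (use assms(2) in simp)

lemma morph_inf_morph_pos:
  assumes "\<And>x. h x \<noteq> []" and "j < length (h (w k))"
  shows "morph_inf h w (morph_pos h w k + j) = h (w k) ! j"
  using map_morph_inf_upt[where j = j and l = 1 and w = w and k = k and r = 1, OF assms(1)] assms(2)
  by (simp add: take_Suc_conv_app_nth)

lemma morph_pos_cover:
  assumes "\<And>x. h x \<noteq> []"
  obtains k j where "n = morph_pos h w k + j" and "j < length (h (w k))"
proof -
  obtain k where "morph_pos h w k \<le> n" and "n < morph_pos h w (Suc k)"
    using strict_mono_interval_cover[of "morph_pos h w"] strict_mono_morph_pos[OF assms] by auto
  then show ?thesis
    using that[of k "n - morph_pos h w k"] by (simp add: morph_pos_Suc)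
qed

section \<open>Overlap-free Thue--Morse words\<close>

locale thue_morse_word =
  fixes t :: "nat \<Rightarrow> bool"
  assumes t_double [simp]: "t (2 * k) = t k"
    and t_double_Suc [simp]: "t (Suc (2 * k)) = (\<not> t k)"
begin

lemma ne_Suc_even: "even k \<Longrightarrow> t k \<noteq> t (Suc k)"
  by (elim evenE) simp

lemma not_alternating: "\<exists>x<5. t (j + x) = t (j + x + 1)"
proof (rule ccontr)
  assume "\<not> ?thesis"
  then have alt: "t (j + x) \<noteq> t (j + x + 1)" if "x < 5" for x using that by auto
  define m where "m = (j + 1) div 2"
  have alt_m: "t (2 * m + x) \<noteq> t (2 * m + x + 1)" if "x < 4" for x
    using alt[of "2 * m - j + x"] that by (simp add: m_def algebra_simps)
  have "t m = t (Suc m)"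
    using alt_m[of 0] alt_m[of 1] t_double[of "Suc m"] by simp
  moreover have "t (Suc m) = t (Suc (Suc m))"
    using alt_m[of 2] alt_m[of 3] t_double[of "Suc m"] t_double[of "Suc (Suc m)"]
    by (simp add: numeral_eq_Suc)
  ultimately show False using ne_Suc_even[of m] ne_Suc_even[of "Suc m"] by auto
qed

lemma overlap_half:
  assumes "\<forall>x\<le>2 * q. t (i + x) = t (i + 2 * q + x)"
  shows "\<forall>x\<le>q. t (i div 2 + x) = t (i div 2 + q + x)"
proof (intro allI impI)
  fix x
  assume "x \<le> q"
  have half: "t (i + 2 * y) = (t (i div 2 + y) \<noteq> odd i)" for y
  proof (cases "even i")
    case True
    then have "i + 2 * y = 2 * (i div 2 + y)" by simp
    then show ?thesis using True by (metis t_double)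
  next
    case False
    then have "i + 2 * y = Suc (2 * (i div 2 + y))" by presburger
    then show ?thesis using False by (metis t_double_Suc)
  qed
  have "t (i + 2 * x) = t (i + 2 * q + 2 * x)"
    using assms \<open>x \<le> q\<close> by simp
  then have "t (i + 2 * x) = t (i + 2 * (q + x))"
    by (simp add: algebra_simps)
  then show "t (i div 2 + x) = t (i div 2 + q + x)"
    using half[of x] half[of "q + x"] by (cases "odd i") (simp_all add: add.assoc)
qed

lemma overlap_odd_alternating:
  assumes overlap: "\<forall>x\<le>p. t (i + x) = t (i + p + x)" and "odd p" and "x < 2 * p"
  shows "t (i + x) \<noteq> t (i + x + 1)"
proof (cases "even (i + x)")
  case True
  then show ?thesis using ne_Suc_even by simp
next
  case False
  show ?thesis
  proof (cases "p \<le> x")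
    case True
    define y where "y = x - p"
    have x: "x = p + y" using True by (simp add: y_def)
    have "y + 1 \<le> p" using \<open>x < 2 * p\<close> x by simp
    have "even (i + y)" using False \<open>odd p\<close> by (simp add: x even_add)
    then have "t (i + y) \<noteq> t (i + y + 1)" using ne_Suc_even by simp
    moreover have "t (i + y) = t (i + x)"
      using overlap[rule_format, of y] \<open>y + 1 \<le> p\<close> by (simp add: x add.assoc)
    moreover have "t (i + y + 1) = t (i + x + 1)"
      using overlap[rule_format, of "y + 1"] \<open>y + 1 \<le> p\<close> by (simp add: x add.assoc)
    ultimately show ?thesis by simp
  next
    case False
    then have "x + 1 \<le> p" by simp
    have "even (i + x + p)" using \<open>odd (i + x)\<close> \<open>odd p\<close> by simp
    then have "t (i + x + p) \<noteq> t (i + x + p + 1)" using ne_Suc_even by simp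
    moreover have "t (i + x) = t (i + x + p)"
      using overlap[rule_format, of x] \<open>x + 1 \<le> p\<close> by (simp add: ac_simps)
    moreover have "t (i + x + 1) = t (i + x + p + 1)"
      using overlap[rule_format, of "x + 1"] \<open>x + 1 \<le> p\<close> by (simp add: ac_simps)
    ultimately show ?thesis by simp
  qed
qed

lemma overlap_free: "0 < p \<Longrightarrow> \<exists>x\<le>p. t (i + x) \<noteq> t (i + p + x)"
proof (induction p arbitrary: i rule: less_induct)
  case (less p)
  show ?case
  proof (rule ccontr)
    assume "\<not> ?case"
    then have overlap: "\<forall>x\<le>p. t (i + x) = t (i + p + x)" by auto
    show False
    proof (cases "even p")
      case True
      then obtain q where q: "p = 2 * q" by blast
      then have "q < p" and "0 < q" using less.prems by simp_all
      with less.IH obtain x where "x \<le> q" and "t (i div 2 + x) \<noteq> t (i div 2 + q + x)" by blast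
      moreover have "\<forall>x\<le>q. t (i div 2 + x) = t (i div 2 + q + x)"
        using overlap_half overlap q by blast
      ultimately show False by blast
    next
      case False
      note alt = overlap_odd_alternating[OF overlap False]
      show False
      proof (cases "p = 1")
        case True
        then show False using alt[of 0] overlap by auto
      next
        case False
        then have "5 < 2 * p" using \<open>odd p\<close> less.prems by presburger
        obtain x where "x < 5" and "t (i + x) = t (i + x + 1)" using not_alternating[of i] by blast
        then show False using alt[of x] \<open>5 < 2 * p\<close> by simp
      qed
    qed
  qed
qed

lemma difference_squarefree:
  assumes d: "\<And>k. d k = (if t k = t (Suc k) then 1 else if t k then 0 else (2::nat))"
    and "0 < q"
  shows "\<exists>x<q. d (i + x) \<noteq> d (i + q + x)"
proof (rule ccontr)
  assume "\<not> ?thesis"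
  then have eq: "d (i + x) = d (i + q + x)" if "x < q" for x using that by auto
  have same_step: "t (Suc (i + x)) = t (Suc (i + q + x)) \<longleftrightarrow> t (i + x) = t (i + q + x)"
    if "x < q" for x
    using eq[OF that] by (simp add: d split: if_splits)
  have constant_step: "t (i + x) = t (Suc (i + x))" if "x < q" and "t (i + x) \<noteq> t (i + q + x)" for x
    using eq[OF that(1)] that(2) by (simp add: d split: if_splits)
  show False
  proof (cases "t i = t (i + q)")
    case True
    have "t (i + x) = t (i + q + x)" if "x \<le> q" for x
      using that by (induction x) (use True same_step in auto)
    then show False using overlap_free[OF \<open>0 < q\<close>, of i] by blast
  next
    case False
    have "t (i + x) \<noteq> t (i + q + x) \<and> t (i + x) = t i" if "x \<le> q" for x
      using that
    proof (induction x)
      case (Suc x)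
      then have "x < q" by simp
      moreover have "t (i + x) \<noteq> t (i + q + x)" and "t (i + x) = t i" using Suc by auto
      ultimately show ?case using same_step constant_step by fastforce
    qed (use False in simp)
    from this[of q] show False using \<open>t i \<noteq> t (i + q)\<close> by simp
  qed
qed

end

section \<open>The words \<open>g\<^sup>\<omega>(0)\<close>, \<open>vtm\<close> and \<open>\<eta>(vtm)\<close>\<close>

abbreviation g_omega :: "nat \<Rightarrow> nat" where
  "g_omega \<equiv> morph_fix g 0"

text \<open>
  Since \<open>g_omega\<close> and \<open>eta_vtm\<close> below contain \<open>g\<close> and \<open>eta\<close>, unfolding \<open>g_def\<close> or
  \<open>eta_def\<close> would also rewrite inside them; the equations \<open>g_simps\<close> and \<open>eta_simps\<close>
  evaluate only applied occurrences.
\<close>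

lemma g_simps [simp]: "g 0 = [0, 1]" "g (Suc 0) = [2, 0]" "g 2 = [2, 3]" "g 3 = [0, 2]"
  by (simp_all add: g_def)

interpretation g: prolongable_uniform_morphism g 2 0
  by unfold_locales (simp_all add: g_def)

lemma g_omega_double: "g_omega (2 * n) = g (g_omega n) ! 0"
  using g.morph_fix_rec[of 0 n] by simp

lemma g_omega_double_Suc: "g_omega (Suc (2 * n)) = g (g_omega n) ! 1"
  using g.morph_fix_rec[of 1 n] by simp

lemma g_omega_0 [simp]: "g_omega 0 = 0"
  by (simp add: morph_fix_def)

lemma g_omega_1 [simp]: "g_omega (Suc 0) = 1"
  using g_omega_double_Suc[of 0] by simp

lemma g_omega_cases: "g_omega n = 0 \<or> g_omega n = 1 \<or> g_omega n = 2 \<or> g_omega n = 3"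
proof -
  have letters: "g x ! c < 4" if "c < 2" for x c
    using that by (auto simp: g_def less_2_cases_iff)
  have "g_omega n = g (g_omega (n div 2)) ! (n mod 2)"
    using g.morph_fix_rec[of "n mod 2" "n div 2"] by simp
  then have "g_omega n < 4" using letters[of "n mod 2"] by simp
  then show ?thesis by linarith
qed

definition g_factors2 :: "(nat \<times> nat) list" where
  "g_factors2 = [(0, 1), (1, 2), (2, 0), (0, 2), (2, 3), (3, 0)]"

lemma g_omega_pairs: "(g_omega k, g_omega (Suc k)) \<in> set g_factors2"
  unfolding g_factors2_def
proof (induction k rule: less_induct)
  case (less k)
  define m where "m = k div 2"
  have "k = 2 * m \<or> k = Suc (2 * m)" unfolding m_def by presburger
  then show ?case
  proof
    assume k: "k = 2 * m"
    then have "g_omega k = g (g_omega m) ! 0" and "g_omega (Suc k) = g (g_omega m) ! 1"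
      by (simp_all add: g_omega_double g_omega_double_Suc)
    then show ?case using g_omega_cases[of m] by (elim disjE) simp_all
  next
    assume k: "k = Suc (2 * m)"
    then have "g_omega k = g (g_omega m) ! 1" and "g_omega (Suc k) = g (g_omega (Suc m)) ! 0"
      using g_omega_double_Suc[of m] g_omega_double[of "Suc m"] by simp_all
    moreover have "(g_omega m, g_omega (Suc m)) \<in> set [(0, 1), (1, 2), (2, 0), (0, 2), (2, 3), (3, 0)]"
      using less.IH k by simp
    ultimately show ?case by auto
  qed
qed

definition thue_morse :: "nat \<Rightarrow> bool" where
  "thue_morse k \<longleftrightarrow> g_omega k = 1 \<or> g_omega k = 2"

interpretation thue_morse: thue_morse_word thue_morse
proof
  fix k
  show "thue_morse (2 * k) = thue_morse k" and "thue_morse (Suc (2 * k)) = (\<not> thue_morse k)"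
    using g_omega_cases[of k] by (auto simp: thue_morse_def g_omega_double g_omega_double_Suc)
qed

lemma vtm_thue_morse:
  "vtm k = (if thue_morse k = thue_morse (Suc k) then 1 else if thue_morse k then 0 else 2)"
  using g_omega_pairs[of k] by (auto simp: vtm_def thue_morse_def tau_def g_factors2_def)

lemma vtm_squarefree: "0 < q \<Longrightarrow> \<exists>x<q. vtm (i + x) \<noteq> vtm (i + q + x)"
  by (rule thue_morse.difference_squarefree[OF vtm_thue_morse])

lemma vtm_less_3: "vtm k < 3"
  by (simp add: vtm_def tau_def)

abbreviation eta_vtm :: "nat \<Rightarrow> nat" where
  "eta_vtm \<equiv> morph_inf eta vtm"

abbreviation block_start :: "nat \<Rightarrow> nat" where
  "block_start \<equiv> morph_pos eta vtm"

lemma eta_nonempty: "eta x \<noteq> []"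
  by (simp add: eta_def)

lemma eta_simps [simp]:
  "eta 0 = [0, 0, 0, 1, 1, 1, 0, 1]"
  "eta (Suc 0) = [0, 0, 1, 1, 1, 0, 0, 0, 1, 1, 0, 1]"
  "eta 2 = [0, 0, 1, 1, 0, 0, 0, 1, 1, 1, 0, 0, 1, 1, 0, 1]"
  by (simp_all add: eta_def)

lemma length_eta_bounds: "8 \<le> length (eta x)" "length (eta x) \<le> 16"
  by (simp_all add: eta_def)

lemma length_eta_inj: "a < 3 \<Longrightarrow> b < 3 \<Longrightarrow> length (eta a) = length (eta b) \<Longrightarrow> a = b"
  by (auto simp: eta_def less_Suc_eq numeral_eq_Suc)

lemma strict_mono_block_start: "strict_mono block_start"
  by (rule strict_mono_morph_pos) (rule eta_nonempty)

lemma block_start_Suc: "block_start (Suc k) = block_start k + length (eta (vtm k))"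
  by (rule morph_pos_Suc)

lemma eta_vtm_block: "j < length (eta (vtm k)) \<Longrightarrow> eta_vtm (block_start k + j) = eta (vtm k) ! j"
  by (rule morph_inf_morph_pos) (simp_all add: eta_nonempty)

lemma block_start_cover:
  obtains k j where "n = block_start k + j" and "j < length (eta (vtm k))"
  by (rule morph_pos_cover[OF eta_nonempty])

lemma eta_vtm_two_blocks:
  assumes "j + l \<le> length (eta (vtm k)) + 8"
  shows "map eta_vtm [block_start k + j..<block_start k + j + l]
    = take l (drop j (eta (vtm k) @ eta (vtm (Suc k))))"
proof -
  have blocks: "morph_apply eta (map vtm [k..<k + 2]) = eta (vtm k) @ eta (vtm (Suc k))"
    by (simp add: numeral_2_eq_2)
  show ?thesis
    using map_morph_inf_upt[where h = eta and j = j and l = l and w = vtm and k = k and r = 2, OF eta_nonempty]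
      assms length_eta_bounds(1)[of "vtm (Suc k)"]
    by (simp add: blocks)
qed

lemma eta_marker:
  "\<forall>a\<in>set [0..<3]. \<forall>b\<in>set [0..<3]. \<forall>j\<in>set [0..<length (eta a)].
     take 3 (drop j (eta a @ eta b)) = [1, 0, 1] \<longleftrightarrow> j + 3 = length (eta a)"
  by code_simp

lemma eta_prefix_marker:
  "\<forall>a\<in>set [0..<3]. \<forall>b\<in>set [0..<3]. \<forall>j\<in>set [0..<length (eta a)].
     (\<exists>c\<in>set [0..<3]. take 8 (drop j (eta a @ eta b)) = take 8 (eta c)) \<longleftrightarrow> j = 0"
  by code_simp

lemma block_start_iff_marker:
  assumes "3 \<le> n"
  shows "n \<in> range block_start \<longleftrightarrow> map eta_vtm [n - 3..<n] = [1, 0, 1]"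
proof -
  obtain k j where n: "n - 3 = block_start k + j" and j: "j < length (eta (vtm k))"
    by (rule block_start_cover)
  have n': "n = block_start k + j + 3" using n assms by simp
  have "map eta_vtm [n - 3..<n] = take 3 (drop j (eta (vtm k) @ eta (vtm (Suc k))))"
    using eta_vtm_two_blocks[of j 3 k] j by (simp add: n')
  moreover have "take 3 (drop j (eta (vtm k) @ eta (vtm (Suc k)))) = [1, 0, 1]
      \<longleftrightarrow> j + 3 = length (eta (vtm k))"
    using eta_marker vtm_less_3 j by simp
  moreover have "n \<in> range block_start \<longleftrightarrow> j + 3 = length (eta (vtm k))"
  proof (cases "n < block_start (Suc k)")
    case True
    then show ?thesis
      using range_strict_mono_between[OF strict_mono_block_start, of k n] n'
      by (simp add: block_start_Suc)
  next
    case False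
    moreover have "n < block_start (Suc (Suc k))"
      using n' j length_eta_bounds(1)[of "vtm (Suc k)"] by (simp add: block_start_Suc)
    ultimately show ?thesis
      using range_strict_mono_between[OF strict_mono_block_start, of "Suc k" n] n'
      by (simp add: block_start_Suc)
  qed
  ultimately show ?thesis by simp
qed

lemma block_start_iff_prefix_marker:
  "n \<in> range block_start \<longleftrightarrow> (\<exists>c<3. map eta_vtm [n..<n + 8] = take 8 (eta c))"
proof -
  obtain k j where n: "n = block_start k + j" and j: "j < length (eta (vtm k))"
    by (rule block_start_cover)
  have "map eta_vtm [n..<n + 8] = take 8 (drop j (eta (vtm k) @ eta (vtm (Suc k))))"
    using eta_vtm_two_blocks[of j 8 k] n j by simp
  moreover have "(\<exists>c<3. take 8 (drop j (eta (vtm k) @ eta (vtm (Suc k)))) = take 8 (eta c))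
      \<longleftrightarrow> j = 0"
    using eta_prefix_marker vtm_less_3 j by (simp add: Bex_def)
  moreover have "n \<in> range block_start \<longleftrightarrow> j = 0"
    using range_strict_mono_between[OF strict_mono_block_start, of k n] n j
    by (simp add: block_start_Suc)
  ultimately show ?thesis by simp
qed

section \<open>Squares of \<open>\<eta>(vtm)\<close>\<close>

lemma eta_synchronizing:
  "\<forall>a\<in>set [0..<3]. \<forall>b\<in>set [0..<3]. \<forall>c\<in>set [0..<3]. \<forall>m\<in>set [1..<length (eta a)].
     prefix (take m (eta a)) (eta b) \<and> suffix (drop m (eta a)) (eta c) \<longrightarrow> a = b \<or> a = c"
  by code_simp

lemma vtm_eq_if_block_shift:
  assumes "block_start (k + q) = block_start k + p" and "block_start (Suc k + q) = block_start (Suc k) + p"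
  shows "vtm (k + q) = vtm k"
  using assms block_start_Suc[of k] block_start_Suc[of "k + q"]
  by (intro length_eta_inj[OF vtm_less_3 vtm_less_3]) simp

context
  fixes i p :: nat
  assumes long: "16 \<le> p"
    and square: "\<And>e. e < p \<Longrightarrow> eta_vtm (i + e) = eta_vtm (i + p + e)"
begin

lemma square_shift_letter: "i \<le> n \<Longrightarrow> n < i + p \<Longrightarrow> eta_vtm (n + p) = eta_vtm n"
  using square[of "n - i"] by (simp add: algebra_simps)

lemma square_block_start_shift:
  assumes "i \<le> n" and "n \<le> i + p"
  shows "n \<in> range block_start \<longleftrightarrow> n + p \<in> range block_start"
proof -
  have shifted: "map eta_vtm [m..<m + l] = map eta_vtm [m + p..<m + p + l]"
    if "i \<le> m" and "m + l \<le> i + p" for m l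
  proof (rule nth_equalityI)
    fix e
    assume "e < length (map eta_vtm [m..<m + l])"
    then have "e < l" by simp
    then have "eta_vtm (i + (m - i + e)) = eta_vtm (i + p + (m - i + e))"
      using that by (intro square) simp
    then show "map eta_vtm [m..<m + l] ! e = map eta_vtm [m + p..<m + p + l] ! e"
      using \<open>e < l\<close> that(1) by (simp add: algebra_simps)
  qed simp
  show ?thesis
  proof (cases "i + 3 \<le> n")
    case True
    then have "map eta_vtm [n - 3..<n] = map eta_vtm [n + p - 3..<n + p]"
      using shifted[of "n - 3" 3] \<open>n \<le> i + p\<close> by (simp add: algebra_simps)
    then show ?thesis using True block_start_iff_marker[of n] block_start_iff_marker[of "n + p"] by simp
  next
    case False
    then show ?thesis
      using shifted[of n 8] long \<open>i \<le> n\<close> block_start_iff_prefix_marker[of n]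
        block_start_iff_prefix_marker[of "n + p"]
      by simp
  qed
qed

lemma square_block_shift:
  obtains q where "0 < q"
    and "\<And>k. i \<le> block_start k \<Longrightarrow> block_start k \<le> i + p \<Longrightarrow> block_start (k + q) = block_start k + p"
proof -
  obtain q where shift:
    "\<And>k. i \<le> block_start k \<Longrightarrow> block_start k \<le> i + p \<Longrightarrow> block_start (k + q) = block_start k + p"
    using strict_mono_range_shift[OF strict_mono_block_start square_block_start_shift] by blast
  obtain k j where i: "i = block_start k + j" and "j < length (eta (vtm k))"
    by (rule block_start_cover)
  then have "i \<le> block_start (Suc k)" and "block_start (Suc k) \<le> i + p"
    using long length_eta_bounds(2)[of "vtm k"] by (simp_all add: block_start_Suc)
  then have "block_start (Suc k + q) = block_start (Suc k) + p" by (rule shift)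
  then have "0 < q" using long by (cases q) simp_all
  then show ?thesis using that shift by blast
qed

context
  fixes q :: nat
  assumes q_pos: "0 < q"
    and shift: "\<And>k. i \<le> block_start k \<Longrightarrow> block_start k \<le> i + p \<Longrightarrow> block_start (k + q) = block_start k + p"
begin

lemma vtm_shift:
  assumes "i \<le> block_start k" and "block_start (Suc k) \<le> i + p"
  shows "vtm (k + q) = vtm k"
proof (rule vtm_eq_if_block_shift)
  have "block_start k < block_start (Suc k)" by (simp add: strict_mono_less[OF strict_mono_block_start])
  then show "block_start (k + q) = block_start k + p" using assms by (intro shift) simp_all
  show "block_start (Suc k + q) = block_start (Suc k) + p"
    using assms \<open>block_start k < block_start (Suc k)\<close> by (intro shift) simp_all
qed

lemma no_square_at_block_start:
  assumes i: "i = block_start k"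
  shows False
proof -
  have last: "block_start (k + q) = i + p" using shift[of k] i by simp
  have "vtm (k + r) = vtm (k + q + r)" if "r < q" for r
  proof -
    have "block_start (Suc (k + r)) \<le> block_start (k + q)"
      using that by (simp add: strict_mono_less_eq[OF strict_mono_block_start])
    then have "i \<le> block_start (k + r)" and "block_start (Suc (k + r)) \<le> i + p"
      using i last by (simp_all add: strict_mono_less_eq[OF strict_mono_block_start])
    then show ?thesis using vtm_shift[of "k + r"] by (simp add: ac_simps)
  qed
  then show False using vtm_squarefree[OF q_pos, of k] by blast
qed

context
  fixes k j :: nat
  assumes i: "i = block_start k + j" and "0 < j" and j: "j < length (eta (vtm k))"
begin

lemma next_block_bounds:
  shows "i < block_start (Suc k)" and "block_start (Suc k) \<le> i + p"
    and "block_start (Suc k + q) = block_start (Suc k) + p"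
proof -
  show "i < block_start (Suc k)" and "block_start (Suc k) \<le> i + p"
    using i j long length_eta_bounds(2)[of "vtm k"] by (simp_all add: block_start_Suc)
  then show "block_start (Suc k + q) = block_start (Suc k) + p" by (intro shift) simp_all
qed

lemma last_block_bounds:
  shows "i < block_start (k + q)" and "block_start (k + q) < i + p"
    and "i + p < block_start (Suc (k + q))"
proof -
  note mono = strict_mono_block_start
  have "Suc k \<le> k + q" using q_pos by simp
  then show "i < block_start (k + q)"
    using next_block_bounds(1) by (meson le_less_trans strict_mono_less_eq[OF mono] less_le_trans)
  show "i + p < block_start (Suc (k + q))" using next_block_bounds by simp
  have "i \<notin> range block_start"
    using range_strict_mono_between[OF mono, of k i] i \<open>0 < j\<close> j by (simp add: block_start_Suc)
  then have not_start: "i + p \<notin> range block_start" using square_block_start_shift[of i] by simp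
  show "block_start (k + q) < i + p"
  proof (rule ccontr)
    assume "\<not> block_start (k + q) < i + p"
    then have "i + p < block_start (k + q)" using not_start by (metis linorder_neqE_nat rangeI not_less)
    define n where "n = block_start (k + q) - p"
    have "block_start (k + q) < block_start (Suc k + q)"
      by (simp add: strict_mono_less[OF mono])
    then have "i \<le> n" and "n \<le> i + p"
      using \<open>i + p < block_start (k + q)\<close> next_block_bounds unfolding n_def by simp_all
    moreover have "n + p \<in> range block_start" using \<open>i + p < block_start (k + q)\<close> by (simp add: n_def)
    ultimately obtain k' where k': "n = block_start k'" using square_block_start_shift by blast
    then have "block_start (k' + q) = block_start (k + q)"
      using shift[of k'] \<open>i \<le> n\<close> \<open>n \<le> i + p\<close> \<open>i + p < block_start (k + q)\<close> by (simp add: n_def)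
    then have "k' = k" using strict_mono_eq[OF mono] by simp
    then show False using k' \<open>i \<le> n\<close> i \<open>0 < j\<close> by simp
  qed
qed

lemma last_block_shift: "block_start (k + q + q) = block_start (k + q) + p"
  using last_block_bounds(1,2) by (intro shift) simp_all

lemma last_block_head_le: "i + p - block_start (k + q) \<le> length (eta (vtm (k + q + q)))"
proof (rule ccontr)
  note bounds = last_block_bounds
  assume long_head: "\<not> ?thesis"
  define n where "n = block_start (k + q) + length (eta (vtm (k + q + q)))"
  have "n + p = block_start (Suc (k + q + q))"
    using last_block_shift block_start_Suc[of "k + q + q"] by (simp add: n_def)
  moreover have "i \<le> n" and "n \<le> i + p" using bounds(1,2) long_head by (simp_all add: n_def)
  ultimately have "n \<in> range block_start" using square_block_start_shift by simp
  moreover have "block_start (k + q) < n" and "n < block_start (Suc (k + q))"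
    using eta_nonempty[of "vtm (k + q + q)"] bounds(3) \<open>n \<le> i + p\<close> by (simp_all add: n_def)
  ultimately show False
    using range_strict_mono_between[OF strict_mono_block_start, of "k + q" n] by simp
qed

lemma prefix_last_block:
  "prefix (take (i + p - block_start (k + q)) (eta (vtm (k + q)))) (eta (vtm (k + q + q)))"
proof -
  define m where "m = i + p - block_start (k + q)"
  have m_less: "m < length (eta (vtm (k + q)))"
    using last_block_bounds(2,3) block_start_Suc[of "k + q"] by (simp add: m_def)
  have m_le: "m \<le> length (eta (vtm (k + q + q)))"
    using last_block_head_le by (simp add: m_def)
  have "take m (eta (vtm (k + q))) = take m (eta (vtm (k + q + q)))"
  proof (rule nth_equalityI)
    show "length (take m (eta (vtm (k + q)))) = length (take m (eta (vtm (k + q + q))))"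
      using m_less m_le by simp
    fix e
    assume "e < length (take m (eta (vtm (k + q))))"
    then have "e < m" by simp
    have "eta (vtm (k + q)) ! e = eta_vtm (block_start (k + q) + e)"
      using \<open>e < m\<close> m_less by (simp add: eta_vtm_block)
    also have "\<dots> = eta_vtm (block_start (k + q) + e + p)"
      using square_shift_letter[of "block_start (k + q) + e"] last_block_bounds(1) \<open>e < m\<close>
      by (simp add: m_def)
    also have "\<dots> = eta (vtm (k + q + q)) ! e"
      using last_block_shift \<open>e < m\<close> m_le eta_vtm_block[of e "k + q + q"] by (simp add: ac_simps)
    finally show "take m (eta (vtm (k + q))) ! e = take m (eta (vtm (k + q + q))) ! e"
      using \<open>e < m\<close> by simp
  qed
  then show ?thesis unfolding m_def[symmetric] by (metis take_is_prefix)
qed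

lemma suffix_last_block:
  "suffix (drop (i + p - block_start (k + q)) (eta (vtm (k + q)))) (eta (vtm k))"
proof -
  define m where "m = i + p - block_start (k + q)"
  note bounds = last_block_bounds
  have ends: "block_start (Suc (k + q)) = block_start (Suc k) + p"
    using next_block_bounds(3) by simp
  have lengths: "length (eta (vtm (k + q))) - m = length (eta (vtm k)) - j"
    using ends bounds block_start_Suc[of "k + q"] block_start_Suc[of k] i by (simp add: m_def)
  have "drop m (eta (vtm (k + q))) = drop j (eta (vtm k))"
  proof (rule nth_equalityI)
    show "length (drop m (eta (vtm (k + q)))) = length (drop j (eta (vtm k)))"
      using lengths by simp
    fix e
    assume "e < length (drop m (eta (vtm (k + q))))"
    then have e: "e < length (eta (vtm k)) - j" using lengths by simp
    have pos: "block_start (k + q) + (m + e) = i + e + p"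
      using bounds(2) by (simp add: m_def)
    have "e < p" using e long length_eta_bounds(2)[of "vtm k"] by simp
    have "drop m (eta (vtm (k + q))) ! e = eta_vtm (block_start (k + q) + (m + e))"
      using e lengths by (simp add: eta_vtm_block)
    also have "\<dots> = eta_vtm (i + e + p)" by (simp only: pos)
    also have "\<dots> = eta_vtm (i + e)" using square_shift_letter[of "i + e"] \<open>e < p\<close> by simp
    also have "\<dots> = drop j (eta (vtm k)) ! e"
      using e i eta_vtm_block[of "j + e" k] by (simp add: add.assoc)
    finally show "drop m (eta (vtm (k + q))) ! e = drop j (eta (vtm k)) ! e" .
  qed
  then show ?thesis unfolding m_def[symmetric] by (metis suffix_drop)
qed

lemma vtm_shift_inside:
  assumes "Suc k \<le> k'" and "k' < k + q"
  shows "vtm (k' + q) = vtm k'"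
proof (rule vtm_shift)
  have "block_start (Suc k) \<le> block_start k'" and "block_start (Suc k') \<le> block_start (k + q)"
    using assms by (simp_all add: strict_mono_less_eq[OF strict_mono_block_start])
  then show "i \<le> block_start k'" and "block_start (Suc k') \<le> i + p"
    using next_block_bounds(1) last_block_bounds(2) by simp_all
qed

lemma no_square_inside_block: False
proof -
  define m where "m = i + p - block_start (k + q)"
  have "0 < m" and "m < length (eta (vtm (k + q)))"
    using last_block_bounds block_start_Suc[of "k + q"] by (simp_all add: m_def)
  then have sync: "vtm (k + q) = vtm (k + q + q) \<or> vtm (k + q) = vtm k"
    using eta_synchronizing[rule_format, of "vtm (k + q)" "vtm (k + q + q)" "vtm k" m]
      prefix_last_block suffix_last_block vtm_less_3
    by (simp add: m_def)
  from sync show False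
  proof
    assume last: "vtm (k + q) = vtm (k + q + q)"
    have "vtm (Suc k + r) = vtm (Suc k + q + r)" if "r < q" for r
    proof (cases "Suc k + r < k + q")
      case True
      then show ?thesis using vtm_shift_inside[of "Suc k + r"] by (simp add: ac_simps)
    next
      case False
      then have "Suc k + r = k + q" and "Suc k + q + r = k + q + q" using that by simp_all
      then show ?thesis using last by (simp only:)
    qed
    then show False using vtm_squarefree[OF q_pos, of "Suc k"] by blast
  next
    assume first: "vtm (k + q) = vtm k"
    have "vtm (k + r) = vtm (k + q + r)" if "r < q" for r
    proof (cases r)
      case 0
      then show ?thesis using first by simp
    next
      case (Suc r')
      then show ?thesis using vtm_shift_inside[of "k + r"] that by (simp add: ac_simps)
    qed
    then show False using vtm_squarefree[OF q_pos, of k] by blast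
  qed
qed

end

end

lemma no_long_square: False
proof -
  obtain q where "0 < q"
    and shift: "\<And>k. i \<le> block_start k \<Longrightarrow> block_start k \<le> i + p \<Longrightarrow> block_start (k + q) = block_start k + p"
    using square_block_shift by blast
  obtain k j where i: "i = block_start k + j" and "j < length (eta (vtm k))"
    by (rule block_start_cover)
  show False
  proof (cases "j = 0")
    case True
    then show False using no_square_at_block_start[OF \<open>0 < q\<close> shift, of k] i by simp
  next
    case False
    then show False using no_square_inside_block[OF \<open>0 < q\<close> shift i] \<open>j < length (eta (vtm k))\<close> by simp
  qed
qed

end

definition g_factors5 :: "nat list list" where
  "g_factors5 = [[0,1,2,0,2], [0,1,2,3,0], [0,2,0,1,2], [0,2,3,0,1], [0,2,3,0,2], [1,2,0,2,3],
    [1,2,3,0,1], [1,2,3,0,2], [2,0,1,2,0], [2,0,1,2,3], [2,0,2,3,0], [2,3,0,1,2], [2,3,0,2,0],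
    [3,0,1,2,0], [3,0,1,2,3], [3,0,2,0,1]]"

lemma g_factors5_closed:
  "\<forall>v\<in>set g_factors5. \<forall>c\<in>set [0..<2]. take 5 (drop c (morph_apply g v)) \<in> set g_factors5"
  by code_simp

lemma g_omega_factor5: "map g_omega [k..<k + 5] \<in> set g_factors5"
proof (induction k rule: less_induct)
  case (less k)
  show ?case
  proof (cases "k = 0")
    case True
    have "map g_omega [0..<5] = take 5 ((morph_apply g ^^ 3) [0])"
      by (rule g.map_morph_fix_prefix) simp
    also have "\<dots> = [0, 1, 2, 0, 2]" by (simp add: numeral_3_eq_3)
    finally show ?thesis using True by (simp add: g_factors5_def)
  next
    case False
    define m c where "m = k div 2" and "c = k mod 2"
    then have k: "k = 2 * m + c" and "c < 2" and "m < k" using False by simp_all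
    have "map g_omega [k..<k + 5] = take 5 (drop c (morph_apply g (map g_omega [m..<m + 5])))"
      using g.map_morph_fix_upt[of c 5 5 m] \<open>c < 2\<close> by (simp add: k)
    then show ?thesis using less.IH[OF \<open>m < k\<close>] g_factors5_closed \<open>c < 2\<close> by auto
  qed
qed

lemma eta_short_squares:
  "\<forall>v\<in>set g_factors5. \<forall>j\<in>set [0..<length (eta (tau (hd v)))]. \<forall>p\<in>set [1..<16].
     let u = take (2 * p) (drop j (morph_apply eta (map tau v)))
     in take p u = drop p u \<longrightarrow> u \<in> {[0, 0], [1, 1], [1, 0, 1, 0]}"
  by code_simp

lemma short_square:
  assumes "0 < p" and "p < 16" and u: "u = map eta_vtm [i..<i + 2 * p]" and "take p u = drop p u"
  shows "u \<in> {[0, 0], [1, 1], [1, 0, 1, 0]}"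
proof -
  obtain k j where i: "i = block_start k + j" and j: "j < length (eta (vtm k))"
    by (rule block_start_cover)
  define v where "v = map g_omega [k..<k + 5]"
  have v: "v \<in> set g_factors5" using g_omega_factor5 by (simp add: v_def)
  have hd_v: "tau (hd v) = vtm k" by (simp add: v_def upt_rec vtm_def)
  have vtm_v: "map tau v = map vtm [k..<k + 5]" by (simp add: v_def vtm_def)
  have blocks: "morph_apply eta (map vtm [k..<k + 5])
      = eta (vtm k) @ morph_apply eta (map vtm [Suc k..<k + 5])"
    by (simp add: upt_rec)
  have "8 * length (map vtm [Suc k..<k + 5]) \<le> length (morph_apply eta (map vtm [Suc k..<k + 5]))"
    by (rule length_morph_apply_ge) (rule length_eta_bounds(1))
  then have "j + 2 * p \<le> length (morph_apply eta (map vtm [k..<k + 5]))"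
    using j \<open>p < 16\<close> by (simp add: blocks)
  then have "u = take (2 * p) (drop j (morph_apply eta (map tau v)))"
    using map_morph_inf_upt[where h = eta and j = j and l = "2 * p" and w = vtm and k = k and r = 5,
        OF eta_nonempty]
    by (simp add: u i vtm_v)
  then show ?thesis
    using eta_short_squares[rule_format, OF v, of j p] \<open>take p u = drop p u\<close> j hd_v assms(1,2)
    by (simp add: Let_def)
qed

lemma square_factor_eta_vtm:
  assumes "is_factor u eta_vtm" and "is_square u"
  shows "u \<in> {[0, 0], [1, 1], [1, 0, 1, 0]}"
proof -
  obtain x where "x \<noteq> []" and ux: "u = x @ x" using assms(2) by (auto simp: is_square_def)
  obtain i where ui: "u = map eta_vtm [i..<i + length u]" using assms(1) by (auto simp: is_factor_def)
  define p where "p = length x"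
  have "0 < p" using \<open>x \<noteq> []\<close> by (simp add: p_def)
  have u: "u = map eta_vtm [i..<i + 2 * p]" using ui ux by (simp add: p_def mult_2)
  show ?thesis
  proof (cases "p < 16")
    case True
    show ?thesis using short_square[OF \<open>0 < p\<close> True u] ux by (simp add: p_def)
  next
    case False
    have "eta_vtm (i + e) = eta_vtm (i + p + e)" if "e < p" for e
    proof -
      have "u ! e = u ! (p + e)" using ux that by (simp add: p_def nth_append)
      then show ?thesis using u that by (simp add: add.assoc)
    qed
    then show ?thesis using no_long_square[of p i] False by simp
  qed
qed

lemma squares_of_eta_vtm:
  "{u. is_factor u eta_vtm \<and> is_square u} = {[0, 0], [1, 1], [1, 0, 1, 0]}"
proof -
  have prefix: "map eta_vtm [j..<j + l] = take l (drop j (eta 2 @ eta 1))" if "j + l \<le> 24" for j l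
    using eta_vtm_two_blocks[of j l 0] that by (simp add: vtm_def[of 0] vtm_def[of "Suc 0"] tau_def)
  have "is_factor [0, 0] eta_vtm"
    unfolding is_factor_def using prefix[of 0 2] by (intro exI[of _ 0]) simp
  moreover have "is_factor [1, 1] eta_vtm"
    unfolding is_factor_def using prefix[of 2 2] by (intro exI[of _ 2]) simp
  moreover have "is_factor [1, 0, 1, 0] eta_vtm"
    unfolding is_factor_def using prefix[of 13 4] by (intro exI[of _ 13]) simp
  moreover have "is_square [0, 0]" unfolding is_square_def by (intro exI[of _ "[0]"]) simp
  moreover have "is_square [1, 1]" unfolding is_square_def by (intro exI[of _ "[1]"]) simp
  moreover have "is_square [1, 0, 1, 0]" unfolding is_square_def by (intro exI[of _ "[1, 0]"]) simp
  ultimately show ?thesis using square_factor_eta_vtm by blast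
qed

section \<open>A 27-state automaton\<close>

declare bin_digits.simps [simp del]

lemma set_bin_digits: "set (bin_digits n) \<subseteq> {0, 1}"
proof (induction n rule: bin_digits.induct)
  case (1 n)
  then show ?case by (subst bin_digits.simps) auto
qed

lemma bin_digits_pos: "0 < n \<Longrightarrow> bin_digits n = bin_digits (n div 2) @ [n mod 2]"
  by (subst bin_digits.simps) simp

lemma foldl_simulation:
  assumes "\<forall>s\<in>S. \<forall>d\<in>D. step s d \<in> S \<and> f (step s d) = delta (f s) d"
    and "s \<in> S" and "set ds \<subseteq> D"
  shows "foldl step s ds \<in> S \<and> foldl delta (f s) ds = f (foldl step s ds)"
  using assms(2,3)
proof (induction ds arbitrary: s)
  case (Cons d ds)
  then have "d \<in> D" and "set ds \<subseteq> D" by simp_all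
  with assms(1) Cons.prems(1) have "step s d \<in> S" and "f (step s d) = delta (f s) d" by auto
  then show ?case using Cons.IH[of "step s d"] \<open>set ds \<subseteq> D\<close> by simp
qed simp

lemma block_start_closed_form: "block_start k = 12 * k + (if thue_morse k then 4 else 0)"
proof (induction k)
  case 0
  then show ?case by (simp add: thue_morse_def)
next
  case (Suc k)
  then show ?case
    using g_omega_pairs[of k]
    by (auto simp: block_start_Suc thue_morse_def vtm_def[of k] tau_def g_factors2_def)
qed

text \<open>
  A state \<open>(a, b, j)\<close> stands for position \<open>block_start k + j\<close> of \<open>\<eta>(vtm)\<close> with
  \<open>a = g_omega k\<close> and \<open>b = g_omega (Suc k)\<close>. By \<open>block_start_closed_form\<close>, appending
  the digit \<open>c\<close> leads to position \<open>block_start (2 k) + off\<close>, which lies in one of the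
  blocks \<open>2 k, 2 k + 1, 2 k + 2\<close>; their letters in \<open>g\<^sup>\<omega>(0)\<close> are \<open>g a @ g b\<close>.
\<close>

definition pos_step :: "nat \<times> nat \<times> nat \<Rightarrow> nat \<Rightarrow> nat \<times> nat \<times> nat" where
  "pos_step s c = (case s of (a, b, j) \<Rightarrow>
     let off = (if a = 1 \<or> a = 2 then 4 else 0) + 2 * j + c;
         l0 = length (eta (tau (g a ! 0))); l1 = length (eta (tau (g a ! 1)))
     in if off < l0 then (g a ! 0, g a ! 1, off)
        else if off < l0 + l1 then (g a ! 1, g b ! 0, off - l0)
        else (g b ! 0, g b ! 1, off - l0 - l1))"

lemma pos_step_sound:
  assumes a: "g_omega k = a" and b: "g_omega (Suc k) = b" and "c < 2"
    and step: "pos_step (a, b, j) c = (a', b', j')"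
  shows "\<exists>k'. g_omega k' = a' \<and> g_omega (Suc k') = b' \<and> 2 * (block_start k + j) + c = block_start k' + j'"
proof -
  define off where "off = (if a = 1 \<or> a = 2 then 4 else 0) + 2 * j + c"
  define l0 l1 where "l0 = length (eta (tau (g a ! 0)))" and "l1 = length (eta (tau (g a ! 1)))"
  have letters: "g_omega (2 * k) = g a ! 0" "g_omega (Suc (2 * k)) = g a ! 1"
    "g_omega (2 * Suc k) = g b ! 0" "g_omega (Suc (2 * Suc k)) = g b ! 1"
    using a b g_omega_double[of k] g_omega_double_Suc[of k] g_omega_double[of "Suc k"]
      g_omega_double_Suc[of "Suc k"]
    by simp_all
  have start: "2 * (block_start k + j) + c = block_start (2 * k) + off"
    using a thue_morse.t_double[of k] by (simp add: block_start_closed_form off_def thue_morse_def)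
  have start1: "block_start (Suc (2 * k)) = block_start (2 * k) + l0"
    using letters(1) by (simp add: block_start_Suc l0_def vtm_def[of "2 * k"])
  have start2: "block_start (2 * Suc k) = block_start (2 * k) + l0 + l1"
    using letters(2) start1 block_start_Suc[of "Suc (2 * k)"] by (simp add: l1_def vtm_def[of "Suc (2 * k)"])
  consider "off < l0" | "l0 \<le> off" "off < l0 + l1" | "l0 + l1 \<le> off" by linarith
  then show ?thesis
  proof cases
    case 1
    then have "(a', b', j') = (g a ! 0, g a ! 1, off)"
      using step by (simp add: pos_step_def off_def l0_def l1_def Let_def)
    then show ?thesis using letters start by (intro exI[of _ "2 * k"]) simp
  next
    case 2
    then have "(a', b', j') = (g a ! 1, g b ! 0, off - l0)"
      using step by (simp add: pos_step_def off_def l0_def l1_def Let_def)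
    then show ?thesis using 2 letters start start1 by (intro exI[of _ "Suc (2 * k)"]) simp
  next
    case 3
    then have "(a', b', j') = (g b ! 0, g b ! 1, off - l0 - l1)"
      using step by (simp add: pos_step_def off_def l0_def l1_def Let_def)
    then show ?thesis using 3 letters start start2 by (intro exI[of _ "2 * Suc k"]) simp
  qed
qed

definition pos_state :: "nat \<Rightarrow> nat \<times> nat \<times> nat" where
  "pos_state n = foldl pos_step (0, 1, 0) (bin_digits n)"

lemma pos_state_sound:
  "pos_state n = (a, b, j) \<Longrightarrow> \<exists>k. g_omega k = a \<and> g_omega (Suc k) = b \<and> n = block_start k + j"
proof (induction n arbitrary: a b j rule: less_induct)
  case (less n)
  show ?case
  proof (cases "n = 0")
    case True
    then have "pos_state n = (0, 1, 0)" by (simp add: pos_state_def bin_digits.simps)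
    then have "a = 0" and "b = 1" and "j = 0" using less.prems by simp_all
    then show ?thesis using True by (intro exI[of _ 0]) simp
  next
    case False
    obtain a0 b0 j0 where s0: "pos_state (n div 2) = (a0, b0, j0)" by (cases "pos_state (n div 2)")
    obtain k where k: "g_omega k = a0" "g_omega (Suc k) = b0" "n div 2 = block_start k + j0"
      using less.IH[OF _ s0] False by auto
    have step: "pos_step (a0, b0, j0) (n mod 2) = (a, b, j)"
      using less.prems False s0 by (simp add: pos_state_def bin_digits_pos)
    obtain k' where "g_omega k' = a" "g_omega (Suc k') = b"
      and "2 * (block_start k + j0) + n mod 2 = block_start k' + j"
      using pos_step_sound[OF k(1,2) _ step] by auto
    moreover have "n = 2 * (n div 2) + n mod 2" by simp
    ultimately show ?thesis using k(3) by metis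
  qed
qed

definition pos_states :: "(nat \<times> nat \<times> nat) list" where
  "pos_states = [(a, b, j). (a, b) \<leftarrow> g_factors2, j \<leftarrow> [0..<length (eta (tau a))]]"

text \<open>
  The 27-state automaton is the quotient of \<open>pos_step\<close> on its 72 states \<open>pos_states\<close>
  under the following labelling.
\<close>

definition state_class :: "nat \<times> nat \<times> nat \<Rightarrow> nat" where
  "state_class s = the (map_of (zip pos_states
     [0,1,2,3,4,5,6,7,8,9,10,11,12,7,13,14,15,16,17,18,2,19,4,5,12,7,13,14,15,16,0,18,20,21,
      22,23,0,1,2,3,4,5,6,7,8,9,10,11,12,7,13,14,15,16,0,18,20,21,22,23,0,1,2,3,24,5,6,25,8,14,
      15,26]) s)"

definition eta_vtm_delta :: "nat \<Rightarrow> nat \<Rightarrow> nat" where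
  "eta_vtm_delta q d = [[0,1], [2,3], [4,5], [6,7], [8,9], [10,11], [12,7], [13,14], [15,16],
     [17,18], [2,19], [4,5], [12,7], [15,16], [0,18], [20,21], [22,23], [0,1], [2,3], [6,7],
     [24,5], [6,25], [8,14], [15,26], [8,9], [13,14], [22,23]] ! q ! d"

definition eta_vtm_output :: "nat \<Rightarrow> nat" where
  "eta_vtm_output q = [0,0,1,1,0,0,0,1,1,1,0,0,1,0,1,0,0,1,1,0,1,1,0,1,1,0,1] ! q"

lemma pos_states_simulation:
  "\<forall>s\<in>set pos_states. \<forall>d\<in>{0, 1}.
     pos_step s d \<in> set pos_states \<and> state_class (pos_step s d) = eta_vtm_delta (state_class s) d"
  by code_simp

lemma pos_states_output:
  "\<forall>(a, b, j)\<in>set pos_states. eta_vtm_output (state_class (a, b, j)) = eta (tau a) ! j"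
  by code_simp

lemma pos_states_initial: "(0, 1, 0) \<in> set pos_states" and state_class_initial: "state_class (0, 1, 0) = 0"
  by code_simp+

lemma eta_vtm_delta_range: "\<forall>q\<in>set [0..<27]. \<forall>d\<in>set [0..<2]. eta_vtm_delta q d < 27"
  by code_simp

lemma eta_vtm_automatic: "two_automatic_with 27 eta_vtm"
  unfolding two_automatic_with_def dfao_generates_def
proof (intro exI conjI allI impI)
  show "(0::nat) < 27" by simp
  show "eta_vtm_delta q d < 27" if "q < 27" and "d < 2" for q d
    using eta_vtm_delta_range that by simp
  fix n
  have run: "pos_state n \<in> set pos_states \<and>
      foldl eta_vtm_delta 0 (bin_digits n) = state_class (pos_state n)"
    using foldl_simulation[OF pos_states_simulation pos_states_initial set_bin_digits]
    by (simp only: pos_state_def state_class_initial)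
  obtain a b j where s: "pos_state n = (a, b, j)" by (cases "pos_state n")
  obtain k where k: "g_omega k = a" "n = block_start k + j" using pos_state_sound[OF s] by blast
  have "j < length (eta (tau a))" using run s by (auto simp: pos_states_def)
  then have "eta_vtm n = eta (tau a) ! j" using eta_vtm_block[of j k] k by (simp add: vtm_def[of k])
  then show "eta_vtm_output (foldl eta_vtm_delta 0 (bin_digits n)) = eta_vtm n"
    using run s pos_states_output by auto
qed

theorem theorem5:
  shows "{u. is_factor u (morph_inf eta vtm) \<and> is_square u} = {[0,0], [1,1], [1,0,1,0]}
         \<and> two_automatic_with 27 (morph_inf eta vtm)"
  using squares_of_eta_vtm eta_vtm_automatic by simp

end
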